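(* Let $\gamma\ge1$ be an integer, $C\subset\{0,1,\dots,p^\gamma-1\}$ nonempty (viewed both as a subset of $\mathbb{Z}/p^\gamma\mathbb{Z}$ and of $\mathbb{Z}_p$), and $\Omega=\bigsqcup_{c\in C}(c+p^\gamma\mathbb{Z}_p)$. The following are equivalent: (i) $\Omega$ tiles $\mathbb{Z}_p$, i.e. there is $T\subset\mathbb{Z}_p$ such that $\mathbb{Z}_p$ is the disjoint union of the sets $\Omega+t$, $t\in T$; (ii) $C$ tiles $\mathbb{Z}/p^\gamma\mathbb{Z}$; (iii) $\Omega$ tiles $\mathbb{Q}_p$.
   Context: $p\ge2$ is a prime. $\mathfrak{m}$ is the Haar measure on $\mathbb{Q}_p$. $C$ tiles $\mathbb{Z}/p^\gamma\mathbb{Z}$ if there is $S\subset\mathbb{Z}/p^\gamma\mathbb{Z}$ such that every element of $\mathbb{Z}/p^\gamma\mathbb{Z}$ is uniquely written as $c+s$ with $c\in C$, $s\in S$. $\Omega$ tiles $\mathbb{Q}_p$ if there is $T\subset\mathbb{Q}_p$ with $\sum_{t\in T}1_\Omega(x-t)=1$ for $\mathfrak{m}$-a.e. $x$. *)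

theory Defs
  imports Complex_Main "HOL-Computational_Algebra.Primes"
begin

text \<open>An element x of Q_p is represented
by the compatible family of its residues x mod p^n Z_p (n = 0,1,2,...), each residue
being taken as the unique representative in Z[1/p] \<inter> [0, p^n).  Thus
Q_p = inverse limit of Z[1/p] / p^n Z, and Z_p is the set of x whose residue mod
Z_p (the component n = 0) vanishes.\<close>

definition red :: "int \<Rightarrow> nat \<Rightarrow> rat \<Rightarrow> rat" where
  "red p n q = q - of_int p ^ n * of_int \<lfloor>q / of_int p ^ n\<rfloor>"

definition Qp :: "int \<Rightarrow> (nat \<Rightarrow> rat) set" where
  "Qp p = {f. \<forall>n. (\<exists>k::nat. \<exists>a::int. f n = of_int a / of_int p ^ k)
                 \<and> 0 \<le> f n \<and> f n < of_int p ^ n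
                 \<and> f n = red p n (f (Suc n))}"

definition Zp :: "int \<Rightarrow> (nat \<Rightarrow> rat) set" where
  "Zp p = {f \<in> Qp p. f 0 = 0}"

definition qp_add :: "int \<Rightarrow> (nat \<Rightarrow> rat) \<Rightarrow> (nat \<Rightarrow> rat) \<Rightarrow> (nat \<Rightarrow> rat)" where
  "qp_add p x y = (\<lambda>n. red p n (x n + y n))"

definition qp_diff :: "int \<Rightarrow> (nat \<Rightarrow> rat) \<Rightarrow> (nat \<Rightarrow> rat) \<Rightarrow> (nat \<Rightarrow> rat)" where
  "qp_diff p x y = (\<lambda>n. red p n (x n - y n))"

definition qp_of_int :: "int \<Rightarrow> int \<Rightarrow> (nat \<Rightarrow> rat)" where
  "qp_of_int p c = (\<lambda>n. red p n (of_int c))"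

text \<open>Membership in p^k Z_p (k an arbitrary integer).\<close>
definition in_pk :: "int \<Rightarrow> int \<Rightarrow> (nat \<Rightarrow> rat) \<Rightarrow> bool" where
  "in_pk p k y = (if 0 \<le> k then y (nat k) = 0
                  else (\<exists>m::int. of_int p ^ nat (- k) * y 0 = of_int m))"

definition qp_ball :: "int \<Rightarrow> (nat \<Rightarrow> rat) \<Rightarrow> int \<Rightarrow> (nat \<Rightarrow> rat) set" where
  "qp_ball p a k = {x \<in> Qp p. in_pk p k (qp_diff p x a)}"

text \<open>Null sets for the Haar measure m on Q_p (normalised by m(a + p^k Z_p) = p^(-k)):
outer measure zero, i.e. coverable by countably many balls of arbitrarily small total
measure.\<close>
definition haar_null :: "int \<Rightarrow> (nat \<Rightarrow> rat) set \<Rightarrow> bool" where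
  "haar_null p N = (N \<subseteq> Qp p \<and>
     (\<forall>\<epsilon>>0. \<exists>(a :: nat \<Rightarrow> nat \<Rightarrow> rat) (k :: nat \<Rightarrow> int).
        (\<forall>i. a i \<in> Qp p) \<and> N \<subseteq> (\<Union>i. qp_ball p (a i) (k i)) \<and>
        summable (\<lambda>i. real_of_int p powr (- real_of_int (k i))) \<and>
        (\<Sum>i. real_of_int p powr (- real_of_int (k i))) < \<epsilon>))"

text \<open>Omega tiles Q_p: there is T \<subseteq> Q_p such that for m-a.e. x,
sum over t in T of 1_Omega(x - t) = 1, i.e. exactly one t \<in> T has x - t \<in> Omega.\<close>
definition tiles_Qp :: "int \<Rightarrow> (nat \<Rightarrow> rat) set \<Rightarrow> bool" where
  "tiles_Qp p \<Omega> = (\<exists>T \<subseteq> Qp p.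
      haar_null p {x \<in> Qp p. \<not> (\<exists>!t. t \<in> T \<and> qp_diff p x t \<in> \<Omega>)})"

definition tiles_Zp :: "int \<Rightarrow> (nat \<Rightarrow> rat) set \<Rightarrow> bool" where
  "tiles_Zp p \<Omega> = (\<exists>T \<subseteq> Zp p.
      (\<Union>t\<in>T. (\<lambda>w. qp_add p w t) ` \<Omega>) = Zp p \<and>
      (\<forall>t\<in>T. \<forall>s\<in>T. t \<noteq> s \<longrightarrow>
          ((\<lambda>w. qp_add p w t) ` \<Omega>) \<inter> ((\<lambda>w. qp_add p w s) ` \<Omega>) = {}))"

definition tiles_ZN :: "int \<Rightarrow> int set \<Rightarrow> bool" where
  "tiles_ZN N C = (\<exists>S \<subseteq> {0..<N}. \<forall>x\<in>{0..<N}.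
      \<exists>!cs. cs \<in> C \<times> S \<and> (fst cs + snd cs) mod N = x)"

end

theory Submission
  imports Defs
begin

text \<open>
Split the residue of a point x modulo p^\<gamma> as x \<gamma> = \<lfloor>x \<gamma>\<rfloor> + x 0, with \<lfloor>x \<gamma>\<rfloor> \<in> {0..<p^\<gamma>} and the
fractional part x 0 \<in> \<int>[1/p] \<inter> [0,1). Then x - t \<in> \<Omega> exactly when x and t have the same fractional part and
(\<lfloor>x \<gamma>\<rfloor> - \<lfloor>t \<gamma>\<rfloor>) mod p^\<gamma> \<in> C. So a tiling complement S of C in \<int>/p^\<gamma>\<int> yields the tiling set
S + (\<int>[1/p] \<inter> [0,1)) of \<rat>_p, which tiles everywhere and whose points in \<int>_p tile \<int>_p; conversely the
residues mod p^\<gamma> of a tiling set of \<int>_p form a tiling complement of C.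

An almost-everywhere tiling of \<rat>_p is an everywhere tiling: whether x is covered exactly once
depends only on x mod p^\<gamma>, so the badly covered points form a union of balls, and no ball is
Haar-null. For the latter, if countably many balls of total measure below p^-m covered a ball of
radius p^-m, then one of its p subballs would again be covered by less than its own measure;
iterating gives nested balls whose limit point lies in none of the covering balls.
\<close>

section \<open>Reduction modulo $p^n$\<close>

context
  fixes p :: int
  assumes p_pos: "p > 0"
begin

lemma red_nonneg: "0 \<le> red p n q"
  and red_less: "red p n q < of_int p ^ n"
proof -
  have P: "(0::rat) < of_int p ^ n" using p_pos by simp
  have "of_int \<lfloor>q / of_int p ^ n\<rfloor> * of_int p ^ n \<le> q" by (rule floor_divide_lower[OF P])
  then show "0 \<le> red p n q" by (simp add: red_def algebra_simps)
  have "q < (of_int \<lfloor>q / of_int p ^ n\<rfloor> + 1) * of_int p ^ n" by (rule floor_divide_upper[OF P])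
  then show "red p n q < of_int p ^ n" by (simp add: red_def algebra_simps)
qed

lemma red_decomp: "q = red p n q + of_int p ^ n * of_int \<lfloor>q / of_int p ^ n\<rfloor>"
  by (simp add: red_def)

lemma red_cong:
  assumes "a = b + of_int p ^ n * of_int k"
  shows "red p n a = red p n b"
proof -
  have "(of_int p ^ n :: rat) \<noteq> 0" using p_pos by simp
  then have "a / of_int p ^ n = b / of_int p ^ n + of_int k" using assms by (simp add: field_simps)
  then have "\<lfloor>a / of_int p ^ n\<rfloor> = \<lfloor>b / of_int p ^ n\<rfloor> + k" by simp
  then show ?thesis using assms by (simp add: red_def algebra_simps)
qed

lemma red_eq_iff: "red p n a = red p n b \<longleftrightarrow> (\<exists>k. a = b + of_int p ^ n * of_int k)"
proof
  assume "red p n a = red p n b"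
  then have "a = b + of_int p ^ n * of_int (\<lfloor>a / of_int p ^ n\<rfloor> - \<lfloor>b / of_int p ^ n\<rfloor>)"
    using red_decomp[of a n] red_decomp[of b n] by (simp add: algebra_simps)
  then show "\<exists>k. a = b + of_int p ^ n * of_int k" ..
qed (auto intro: red_cong)

lemma red_eq_self: "0 \<le> q \<Longrightarrow> q < of_int p ^ n \<Longrightarrow> red p n q = q"
  using p_pos by (simp add: red_def floor_eq_iff)

lemma red_idem: "red p n (red p n q) = red p n q"
  using red_eq_self red_nonneg red_less by blast

lemma red_red:
  assumes "n \<le> m"
  shows "red p n (red p m q) = red p n q"
proof -
  have "of_int p ^ m = (of_int p ^ n * of_int (p ^ (m - n)) :: rat)"
    using assms by (simp add: power_add[symmetric])
  then have "red p m q = q + of_int p ^ n * of_int (- (p ^ (m - n) * \<lfloor>q / of_int p ^ m\<rfloor>))"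
    by (simp add: red_def algebra_simps)
  then show ?thesis by (rule red_cong)
qed

lemma red_add_cong:
  assumes "red p n a = red p n b" "red p n c = red p n d"
  shows "red p n (a + c) = red p n (b + d)"
proof -
  obtain k l where "a = b + of_int p ^ n * of_int k" "c = d + of_int p ^ n * of_int l"
    using assms unfolding red_eq_iff by blast
  then have "a + c = (b + d) + of_int p ^ n * of_int (k + l)" by (simp add: algebra_simps)
  then show ?thesis by (rule red_cong)
qed

lemma red_diff_cong:
  assumes "red p n a = red p n b" "red p n c = red p n d"
  shows "red p n (a - c) = red p n (b - d)"
proof -
  obtain k l where "a = b + of_int p ^ n * of_int k" "c = d + of_int p ^ n * of_int l"
    using assms unfolding red_eq_iff by blast
  then have "a - c = (b - d) + of_int p ^ n * of_int (k - l)" by (simp add: algebra_simps)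
  then show ?thesis by (rule red_cong)
qed

lemma red_of_int: "red p n (of_int a) = of_int (a mod p ^ n)"
proof -
  have "\<lfloor>(of_int a :: rat) / of_int p ^ n\<rfloor> = a div p ^ n"
    by (metis floor_divide_of_int_eq of_int_power)
  then show ?thesis by (simp add: red_def minus_div_mult_eq_mod [symmetric] algebra_simps)
qed

lemma red_diff_eq_0_iff:
  assumes "0 \<le> u" "u < of_int p ^ n" "0 \<le> v" "v < of_int p ^ n"
  shows "red p n (u - v) = 0 \<longleftrightarrow> u = v"
proof
  assume "red p n (u - v) = 0"
  then obtain k where k: "u - v = of_int p ^ n * of_int k"
    using red_eq_iff[of n "u - v" 0] by (auto simp: red_def)
  have P: "(0::rat) < of_int p ^ n" using p_pos by simp
  have "of_int p ^ n * of_int k < of_int p ^ n * (1::rat)" "of_int p ^ n * (-1::rat) < of_int p ^ n * of_int k"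
    using assms k by linarith+
  then have "of_int k < (1::rat)" "(-1::rat) < of_int k"
    using mult_less_cancel_left_pos[OF P] by blast+
  then have "k = 0" by linarith
  then show "u = v" using k by simp
qed (simp add: red_def)

lemma red_int_plus_diff_imp_eq:
  assumes "red p n (of_int i + (u - v)) = of_int c" "0 \<le> u" "u < 1" "0 \<le> v" "v < 1"
  shows "u = v"
proof -
  have "of_int i + (u - v) = of_int c + of_int p ^ n * of_int \<lfloor>(of_int i + (u - v)) / of_int p ^ n\<rfloor>"
    using red_decomp[of "of_int i + (u - v)" n] assms(1) by simp
  then have "u - v = of_int (c + p ^ n * \<lfloor>(of_int i + (u - v)) / of_int p ^ n\<rfloor> - i)"
    by simp
  then obtain m where m: "u - v = of_int m" by blast
  have "-1 < m" "m < 1" using assms(2-5) m by linarith+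
  then show ?thesis using m by simp
qed

end

section \<open>The model of $\mathbb{Q}_p$\<close>

definition p_fraction :: "int \<Rightarrow> rat \<Rightarrow> bool" where
  "p_fraction p q = (\<exists>k::nat. \<exists>a::int. q = of_int a / of_int p ^ k)"

lemma p_fraction_of_int: "p_fraction p (of_int a)"
  unfolding p_fraction_def by (rule exI[of _ 0]) auto

lemma p_fraction_add:
  assumes "(p::int) > 0" "p_fraction p a" "p_fraction p b" shows "p_fraction p (a + b)"
proof -
  obtain k x where a: "a = of_int x / of_int p ^ k" using assms(2) by (auto simp: p_fraction_def)
  obtain l y where b: "b = of_int y / of_int p ^ l" using assms(3) by (auto simp: p_fraction_def)
  have "(of_int p :: rat) ^ k \<noteq> 0" "(of_int p :: rat) ^ l \<noteq> 0" using assms by auto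
  then have "a + b = of_int (x * p ^ l + y * p ^ k) / of_int p ^ (k + l)"
    unfolding a b by (simp add: add_frac_eq power_add)
  then show ?thesis unfolding p_fraction_def by blast
qed

lemma p_fraction_uminus: "p_fraction p a \<Longrightarrow> p_fraction p (- a)"
  unfolding p_fraction_def by (metis minus_divide_left of_int_minus)

lemma p_fraction_diff: "(p::int) > 0 \<Longrightarrow> p_fraction p a \<Longrightarrow> p_fraction p b \<Longrightarrow> p_fraction p (a - b)"
  using p_fraction_add[of p a "- b"] p_fraction_uminus[of p b] by simp

lemma p_fraction_red: "(p::int) > 0 \<Longrightarrow> p_fraction p q \<Longrightarrow> p_fraction p (red p n q)"
proof -
  assume "(p::int) > 0" "p_fraction p q"
  then have "p_fraction p (q - of_int (p ^ n * \<lfloor>q / of_int p ^ n\<rfloor>))"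
    using p_fraction_diff p_fraction_of_int by blast
  then show ?thesis by (simp add: red_def)
qed

lemma Qp_iff: "x \<in> Qp p \<longleftrightarrow>
    (\<forall>n. p_fraction p (x n) \<and> 0 \<le> x n \<and> x n < of_int p ^ n \<and> x n = red p n (x (Suc n)))"
  unfolding Qp_def p_fraction_def by simp

lemma QpD:
  assumes "x \<in> Qp p"
  shows "p_fraction p (x n)" "0 \<le> x n" "x n < of_int p ^ n" "x n = red p n (x (Suc n))"
  using assms unfolding Qp_iff by blast+

lemma Qp_red:
  assumes "(p::int) > 0" "x \<in> Qp p" "n \<le> m"
  shows "x n = red p n (x m)"
  using assms(3)
proof (induction m)
  case 0 then show ?case using red_eq_self[OF assms(1) QpD(2,3)[OF assms(2)]] by simp
next
  case (Suc m)
  show ?case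
  proof (cases "n = Suc m")
    case True then show ?thesis using red_eq_self[OF assms(1) QpD(2,3)[OF assms(2)]] by simp
  next
    case False
    then have "x n = red p n (red p m (x (Suc m)))" using Suc QpD(4)[OF assms(2), of m] by simp
    then show ?thesis using red_red[OF assms(1)] False Suc.prems by simp
  qed
qed

lemma Qp_red_self: "(p::int) > 0 \<Longrightarrow> x \<in> Qp p \<Longrightarrow> red p n (x n) = x n"
  using red_eq_self QpD(2,3) by blast

lemma Qp_red_Suc: "(p::int) > 0 \<Longrightarrow> x \<in> Qp p \<Longrightarrow> red p n (x (Suc n)) = red p n (x n)"
  using QpD(4)[of x p n] Qp_red_self[of p x n] by simp

lemma Qp_floor_add_frac:
  assumes "(p::int) > 0" "x \<in> Qp p"
  shows "x n = of_int \<lfloor>x n\<rfloor> + x 0"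
  using Qp_red[OF assms, of 0 n] by (simp add: red_def)

lemma Qp_floor_range:
  assumes "x \<in> Qp p"
  shows "\<lfloor>x n\<rfloor> \<in> {0..<p ^ n}"
  using QpD(2,3)[OF assms, of n] by (simp add: floor_less_iff)

lemma red_seq_in_Qp:
  assumes "(p::int) > 0" "\<And>n. p_fraction p (f n)" "\<And>n. red p n (f (Suc n)) = red p n (f n)"
  shows "(\<lambda>n. red p n (f n)) \<in> Qp p"
  unfolding Qp_iff
proof (intro allI conjI)
  fix n
  show "p_fraction p (red p n (f n))" using p_fraction_red assms(1,2) by blast
  show "0 \<le> red p n (f n)" "red p n (f n) < of_int p ^ n" using red_nonneg red_less assms(1) by auto
  show "red p n (f n) = red p n (red p (Suc n) (f (Suc n)))"
    using red_red[OF assms(1), of n "Suc n"] assms(3) by simp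
qed

definition qp_of_rat :: "int \<Rightarrow> rat \<Rightarrow> nat \<Rightarrow> rat" where
  "qp_of_rat p u = (\<lambda>n. red p n u)"

lemma qp_of_rat_in_Qp: "(p::int) > 0 \<Longrightarrow> p_fraction p u \<Longrightarrow> qp_of_rat p u \<in> Qp p"
  unfolding qp_of_rat_def using red_seq_in_Qp[of p "\<lambda>_. u"] by simp

lemma qp_of_int_eq: "qp_of_int p c = qp_of_rat p (of_int c)"
  by (simp add: qp_of_int_def qp_of_rat_def)

lemma qp_add_in_Qp:
  assumes "(p::int) > 0" "x \<in> Qp p" "y \<in> Qp p"
  shows "qp_add p x y \<in> Qp p"
  unfolding qp_add_def
proof (rule red_seq_in_Qp[OF assms(1)])
  show "p_fraction p (x n + y n)" for n
    using p_fraction_add[OF assms(1)] QpD(1) assms(2,3) by blast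
  show "red p n (x (Suc n) + y (Suc n)) = red p n (x n + y n)" for n
    by (rule red_add_cong[OF assms(1) Qp_red_Suc Qp_red_Suc]) (use assms in auto)
qed

lemma qp_diff_in_Qp:
  assumes "(p::int) > 0" "x \<in> Qp p" "y \<in> Qp p"
  shows "qp_diff p x y \<in> Qp p"
  unfolding qp_diff_def
proof (rule red_seq_in_Qp[OF assms(1)])
  show "p_fraction p (x n - y n)" for n
    using p_fraction_diff[OF assms(1)] QpD(1) assms(2,3) by blast
  show "red p n (x (Suc n) - y (Suc n)) = red p n (x n - y n)" for n
    by (rule red_diff_cong[OF assms(1) Qp_red_Suc Qp_red_Suc]) (use assms in auto)
qed

lemma qp_add_diff_cancel:
  assumes "(p::int) > 0" "z \<in> Qp p"
  shows "qp_add p (qp_diff p z t) t = z"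
proof
  fix n
  have "red p n (red p n (z n - t n) + t n) = red p n (z n - t n + t n)"
    by (rule red_add_cong[OF assms(1) red_idem[OF assms(1)] refl])
  then show "qp_add p (qp_diff p z t) t n = z n"
    using Qp_red_self[OF assms] by (simp add: qp_add_def qp_diff_def)
qed

lemma qp_diff_add_cancel:
  assumes "(p::int) > 0" "w \<in> Qp p"
  shows "qp_diff p (qp_add p w t) t = w"
proof
  fix n
  have "red p n (red p n (w n + t n) - t n) = red p n (w n + t n - t n)"
    by (rule red_diff_cong[OF assms(1) red_idem[OF assms(1)] refl])
  then show "qp_diff p (qp_add p w t) t n = w n"
    using Qp_red_self[OF assms] by (simp add: qp_add_def qp_diff_def)
qed

lemma mem_translate_iff:
  assumes "(p::int) > 0" "t \<in> Qp p" "\<Omega> \<subseteq> Qp p"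
  shows "z \<in> (\<lambda>w. qp_add p w t) ` \<Omega> \<longleftrightarrow> z \<in> Qp p \<and> qp_diff p z t \<in> \<Omega>"
proof
  assume "z \<in> (\<lambda>w. qp_add p w t) ` \<Omega>"
  then obtain w where w: "w \<in> \<Omega>" "z = qp_add p w t" by auto
  then have "w \<in> Qp p" using assms(3) by blast
  then show "z \<in> Qp p \<and> qp_diff p z t \<in> \<Omega>"
    using w qp_add_in_Qp[OF assms(1) _ assms(2)] qp_diff_add_cancel[OF assms(1)] by simp
next
  assume z: "z \<in> Qp p \<and> qp_diff p z t \<in> \<Omega>"
  then have "z = qp_add p (qp_diff p z t) t" using qp_add_diff_cancel[OF assms(1)] by simp
  then show "z \<in> (\<lambda>w. qp_add p w t) ` \<Omega>" using z by blast
qed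

lemma qp_add_in_Zp: "(p::int) > 0 \<Longrightarrow> x \<in> Zp p \<Longrightarrow> y \<in> Zp p \<Longrightarrow> qp_add p x y \<in> Zp p"
  unfolding Zp_def using qp_add_in_Qp by (auto simp: qp_add_def red_def)

lemma in_Zp_if_qp_diff_in_Zp:
  assumes "(p::int) > 0" "z \<in> Zp p" "t \<in> Qp p" "qp_diff p z t \<in> Zp p"
  shows "t \<in> Zp p"
proof -
  have "red p 0 (z 0 - t 0) = 0" "z \<in> Qp p" using assms(2,4) by (auto simp: Zp_def qp_diff_def)
  then have "z 0 = t 0" using red_diff_eq_0_iff[OF assms(1)] QpD(2,3) assms(3) by blast
  then show ?thesis using assms(2,3) by (simp add: Zp_def)
qed

lemma qp_of_int_in_Zp: "(p::int) > 0 \<Longrightarrow> qp_of_int p c \<in> Zp p"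
  unfolding Zp_def qp_of_int_eq
  using qp_of_rat_in_Qp p_fraction_of_int by (auto simp: qp_of_rat_def red_def)

lemma qp_of_int_nth: "(p::int) > 0 \<Longrightarrow> c \<in> {0..<p ^ n} \<Longrightarrow> qp_of_int p c n = of_int c"
  unfolding qp_of_int_def by (simp add: red_of_int)

lemma mem_qp_ball_iff:
  assumes "(p::int) > 0" "a \<in> Qp p"
  shows "x \<in> qp_ball p a (int n) \<longleftrightarrow> x \<in> Qp p \<and> x n = a n"
  using red_diff_eq_0_iff[OF assms(1)] QpD(2,3) assms(2)
  by (auto simp: qp_ball_def in_pk_def qp_diff_def red_def)

lemma Qp_coherent_limit:
  assumes "(p::int) > 0" "\<And>l. Y l \<in> Qp p" "\<And>l. Y (Suc l) (m + l) = Y l (m + l)"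
  shows "(\<lambda>n. Y n n) \<in> Qp p" and "n \<le> m + l \<Longrightarrow> Y n n = Y l n"
proof -
  have stable: "Y (l + d) n = Y l n" if "n \<le> m + l" for n l d
  proof (induction d)
    case (Suc d)
    have le: "n \<le> m + (l + d)" using that by simp
    have "Y (Suc (l + d)) n = red p n (Y (Suc (l + d)) (m + (l + d)))"
      by (rule Qp_red[OF assms(1,2) le])
    also have "\<dots> = Y (l + d) n"
      unfolding assms(3) by (rule Qp_red[OF assms(1,2) le, symmetric])
    finally show ?case using Suc.IH by simp
  qed simp
  show agree: "Y n n = Y l n" if "n \<le> m + l" for n l
  proof (cases "l \<le> n")
    case True
    then show ?thesis using stable[OF that, of "n - l"] by simp
  next
    case False
    then have "Y (n + (l - n)) n = Y n n" by (intro stable) simp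
    then show ?thesis using False by simp
  qed
  show "(\<lambda>n. Y n n) \<in> Qp p"
    unfolding Qp_iff
  proof (intro allI conjI)
    fix n
    show "p_fraction p (Y n n)" "0 \<le> Y n n" "Y n n < of_int p ^ n" using QpD(1-3)[OF assms(2)] by auto
    have "Y n n = Y (Suc n) n" by (rule agree) simp
    also have "\<dots> = red p n (Y (Suc n) (Suc n))" by (rule QpD(4)[OF assms(2)])
    finally show "Y n n = red p n (Y (Suc n) (Suc n))" .
  qed
qed

section \<open>Balls are not Haar-null\<close>

lemma haar_null_mono: "haar_null p B \<Longrightarrow> A \<subseteq> B \<Longrightarrow> haar_null p A"
  unfolding haar_null_def by (meson order_trans)

lemma powr_neg_of_nat: "(p::int) > 0 \<Longrightarrow> real_of_int p powr (- real n) = (1 / real_of_int p) ^ n"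
  by (simp add: powr_minus powr_realpow divide_inverse power_inverse)

lemma haar_null_empty:
  assumes "(p::int) > 1"
  shows "haar_null p {}"
  unfolding haar_null_def
proof (intro conjI allI impI)
  fix e :: real assume e: "0 < e"
  define q where "q = 1 / real_of_int p"
  have q: "0 < q" "q \<le> 1 / 2" using assms unfolding q_def by auto
  obtain K where K: "q ^ K < e / 2" using real_arch_pow_inv[of "e / 2" q] e q by auto
  define k where "k i = int (K + i)" for i :: nat
  have "(\<lambda>i. real_of_int p powr (- real_of_int (k i))) = (\<lambda>i. q ^ K * q ^ i)"
  proof
    fix i
    have "real_of_int p powr (- real_of_int (k i)) = q ^ (K + i)"
      unfolding k_def q_def using powr_neg_of_nat[of p "K + i"] assms by simp
    then show "real_of_int p powr (- real_of_int (k i)) = q ^ K * q ^ i" by (simp add: power_add)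
  qed
  moreover have "(\<lambda>i. q ^ K * q ^ i) sums (q ^ K * (1 / (1 - q)))"
    using sums_mult[OF geometric_sums[of q], of "q ^ K"] q by simp
  moreover have "q ^ K * (1 / (1 - q)) < e"
  proof -
    have "q ^ K * (1 / (1 - q)) \<le> q ^ K * 2" using q by (intro mult_left_mono) (auto simp: field_simps)
    then show ?thesis using K by linarith
  qed
  ultimately show "\<exists>(a :: nat \<Rightarrow> nat \<Rightarrow> rat) (k :: nat \<Rightarrow> int).
        (\<forall>i. a i \<in> Qp p) \<and> {} \<subseteq> (\<Union>i. qp_ball p (a i) (k i)) \<and>
        summable (\<lambda>i. real_of_int p powr (- real_of_int (k i))) \<and>
        (\<Sum>i. real_of_int p powr (- real_of_int (k i))) < e"
    using qp_of_int_in_Zp[of p 0] assms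
    by (intro exI[of _ "\<lambda>i. qp_of_int p 0"] exI[of _ k]) (auto simp: sums_iff Zp_def)
qed simp

locale ball_cover =
  fixes p :: int and a :: "nat \<Rightarrow> nat \<Rightarrow> rat" and k :: "nat \<Rightarrow> nat"
  assumes p_gt_1: "p > 1" and centre_in_Qp: "a i \<in> Qp p"
    and summable_radii: "summable (\<lambda>i. (1 / real_of_int p) ^ k i)"
begin

lemma p_pos: "p > 0" using p_gt_1 by simp

definition q :: real where "q = 1 / real_of_int p"

lemma q_pos: "0 < q" and q_less_1: "q < 1" and p_times_q: "real_of_int p * q = 1"
  using p_gt_1 unfolding q_def by auto

text \<open>mass m y i is the Haar measure of the intersection of the i-th ball a i + p^(k i) \<int>_p
with the ball y + p^m \<int>_p; cover_mass m y bounds the measure of the part of y + p^m \<int>_p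
covered by the balls.\<close>
definition mass :: "nat \<Rightarrow> (nat \<Rightarrow> rat) \<Rightarrow> nat \<Rightarrow> real" where
  "mass m y i = (if m \<le> k i then of_bool (a i m = y m) * q ^ k i
                 else of_bool (a i (k i) = y (k i)) * q ^ m)"

definition cover_mass :: "nat \<Rightarrow> (nat \<Rightarrow> rat) \<Rightarrow> real" where
  "cover_mass m y = (\<Sum>i. mass m y i)"

lemma mass_nonneg: "0 \<le> mass m y i"
  unfolding mass_def using q_pos by auto

lemma mass_le: "mass m y i \<le> q ^ k i"
proof -
  have "q ^ m \<le> q ^ k i" if "\<not> m \<le> k i" using that q_pos q_less_1 by (intro power_decreasing) auto
  then show ?thesis unfolding mass_def using q_pos by auto
qed

lemma summable_mass: "summable (mass m y)"
  using summable_radii unfolding q_def[symmetric]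
  by (rule summable_comparison_test'[of _ 0]) (use mass_nonneg mass_le in auto)

lemma mass_le_cover_mass: "mass m y i \<le> cover_mass m y"
  using sum_le_suminf[OF summable_mass, of "{i}"] mass_nonneg by (simp add: cover_mass_def)

lemma cover_mass_le: "cover_mass m y \<le> (\<Sum>i. q ^ k i)"
  using summable_radii unfolding cover_mass_def q_def[symmetric]
  by (intro suminf_le[OF mass_le summable_mass])

lemma mass_if_centre_agrees:
  assumes "a i (k i) = y (k i)" "k i \<le> m"
  shows "mass m y i = q ^ m"
  using assms by (cases "m = k i") (auto simp: mass_def)

text \<open>The centres of the p subballs of y + p^m \<int>_p of radius p^-(m+1).\<close>
definition subball_centre :: "nat \<Rightarrow> (nat \<Rightarrow> rat) \<Rightarrow> nat \<Rightarrow> nat \<Rightarrow> rat" where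
  "subball_centre m y j = qp_of_rat p (y m + of_int (int j * p ^ m))"

lemma subball_centre_in_Qp: "y \<in> Qp p \<Longrightarrow> subball_centre m y j \<in> Qp p"
  unfolding subball_centre_def
  by (intro qp_of_rat_in_Qp p_pos p_fraction_add QpD(1) p_fraction_of_int)

lemma subball_centre_low:
  assumes "y \<in> Qp p" "n \<le> m"
  shows "subball_centre m y j n = y n"
proof -
  have "y m + of_int (int j * p ^ m) = y m + of_int p ^ n * of_int (int j * p ^ (m - n))"
    using assms(2) by (simp flip: power_add)
  then have "red p n (y m + of_int (int j * p ^ m)) = red p n (y m)"
    by (rule red_cong[OF p_pos])
  then show ?thesis using Qp_red[OF p_pos assms] by (simp add: subball_centre_def qp_of_rat_def)
qed

lemma subball_centre_top:
  assumes "y \<in> Qp p" "j < nat p"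
  shows "subball_centre m y j (Suc m) = y m + of_int (int j * p ^ m)"
proof -
  have y: "0 \<le> y m" "y m < of_int p ^ m" using QpD(2,3)[OF assms(1)] by auto
  have "(of_int (int j * p ^ m) :: rat) \<le> of_int ((p - 1) * p ^ m)"
    using assms(2) p_pos by (intro of_int_le_iff[THEN iffD2] mult_right_mono) auto
  then have "y m + of_int (int j * p ^ m) < of_int p ^ Suc m"
    using y by (simp add: algebra_simps)
  then show ?thesis
    using y p_pos unfolding subball_centre_def qp_of_rat_def by (intro red_eq_self) auto
qed

lemma subball_count:
  assumes "y \<in> Qp p" "b \<in> Qp p"
  shows "(\<Sum>j<nat p. of_bool (b (Suc m) = subball_centre m y j (Suc m)) :: real) = of_bool (b m = y m)"
proof (cases "b m = y m")
  case False
  have "b (Suc m) \<noteq> subball_centre m y j (Suc m)" for j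
  proof
    assume "b (Suc m) = subball_centre m y j (Suc m)"
    then have "b m = subball_centre m y j m"
      using Qp_red[OF p_pos assms(2), of m "Suc m"] Qp_red[OF p_pos subball_centre_in_Qp[OF assms(1)], of m "Suc m"]
      by simp
    then show False using False subball_centre_low[OF assms(1)] by simp
  qed
  then show ?thesis using False by simp
next
  case True
  define f where "f = \<lfloor>b (Suc m) / of_int p ^ m\<rfloor>"
  have b: "b (Suc m) = y m + of_int p ^ m * of_int f"
    using red_decomp[OF p_pos, of "b (Suc m)" m] Qp_red[OF p_pos assms(2), of m "Suc m"] True
    unfolding f_def by simp
  have P: "(0::rat) < of_int p ^ m" using p_pos by simp
  have "0 \<le> b (Suc m)" "b (Suc m) < of_int p * of_int p ^ m" using QpD(2,3)[OF assms(2), of "Suc m"] by auto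
  then have "0 \<le> b (Suc m) / of_int p ^ m" "b (Suc m) / of_int p ^ m < of_int p"
    using P by (auto simp: divide_less_eq mult.commute)
  then have f: "0 \<le> f" "f < p" unfolding f_def by (auto simp: floor_less_iff)
  have "b (Suc m) = subball_centre m y j (Suc m) \<longleftrightarrow> j = nat f" if "j < nat p" for j
  proof -
    have "b (Suc m) = subball_centre m y j (Suc m) \<longleftrightarrow> (of_int f :: rat) = of_int (int j)"
      unfolding subball_centre_top[OF assms(1) that] b using p_pos by (simp add: mult.commute)
    also have "\<dots> \<longleftrightarrow> j = nat f" using f by (auto simp only: of_int_eq_iff)
    finally show ?thesis .
  qed
  then have "(\<Sum>j<nat p. of_bool (b (Suc m) = subball_centre m y j (Suc m)) :: real) =
      (\<Sum>j<nat p. of_bool (j = nat f))"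
    by (intro sum.cong) auto
  then show ?thesis using f True by simp
qed

lemma mass_split:
  assumes "y \<in> Qp p"
  shows "mass m y i = (\<Sum>j<nat p. mass (Suc m) (subball_centre m y j) i)"
proof (cases "Suc m \<le> k i")
  case True
  have "(\<Sum>j<nat p. mass (Suc m) (subball_centre m y j) i) =
        (\<Sum>j<nat p. of_bool (a i (Suc m) = subball_centre m y j (Suc m))) * q ^ k i"
    using True by (simp add: mass_def sum_distrib_right)
  also have "\<dots> = mass m y i"
    using True subball_count[OF assms centre_in_Qp] by (simp add: mass_def)
  finally show ?thesis ..
next
  case False
  have "(\<Sum>j<nat p. mass (Suc m) (subball_centre m y j) i) =
        real (nat p) * (of_bool (a i (k i) = y (k i)) * q ^ Suc m)"
    using False subball_centre_low[OF assms, of "k i" m] by (simp add: mass_def)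
  also have "\<dots> = mass m y i"
    using False p_pos p_times_q by (cases "k i = m") (auto simp: mass_def)
  finally show ?thesis ..
qed

lemma cover_mass_descent:
  assumes "y \<in> Qp p" "cover_mass m y < q ^ m"
  shows "\<exists>j<nat p. cover_mass (Suc m) (subball_centre m y j) < q ^ Suc m"
proof (rule ccontr)
  assume "\<not> ?thesis"
  then have "(\<Sum>j<nat p. q ^ Suc m) \<le> (\<Sum>j<nat p. cover_mass (Suc m) (subball_centre m y j))"
    by (intro sum_mono) auto
  also have "\<dots> = cover_mass m y"
    unfolding cover_mass_def mass_split[OF assms(1)]
    by (rule suminf_sum[symmetric]) (rule summable_mass)
  finally have le: "real (nat p) * q ^ Suc m \<le> cover_mass m y" by simp
  have "real (nat p) * q ^ Suc m = (real_of_int p * q) * q ^ m" using p_pos by simp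
  also have "\<dots> = q ^ m" using p_times_q by simp
  finally show False using le assms(2) by linarith
qed

lemma exists_uncovered_point:
  assumes "y \<in> Qp p" "cover_mass m y < q ^ m"
  shows "\<exists>x\<in>Qp p. x m = y m \<and> (\<forall>i. x (k i) \<noteq> a i (k i))"
proof -
  let ?P = "\<lambda>l z. z \<in> Qp p \<and> z m = y m \<and> cover_mass (m + l) z < q ^ (m + l)"
  have "\<exists>Y. \<forall>l. ?P l (Y l) \<and> Y (Suc l) (m + l) = Y l (m + l)"
  proof (rule dependent_nat_choice)
    show "\<exists>z. ?P 0 z" using assms by auto
  next
    fix z l assume z: "?P l z"
    then obtain j where j: "cover_mass (Suc (m + l)) (subball_centre (m + l) z j) < q ^ Suc (m + l)"
      using cover_mass_descent by blast
    have "subball_centre (m + l) z j (m + l) = z (m + l)" "subball_centre (m + l) z j m = z m"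
      using subball_centre_low[of z] z by simp_all
    then show "\<exists>z'. ?P (Suc l) z' \<and> z' (m + l) = z (m + l)"
      using z j subball_centre_in_Qp[of z] by (intro exI[of _ "subball_centre (m + l) z j"]) simp
  qed
  then obtain Y where Y: "\<And>l. ?P l (Y l)" "\<And>l. Y (Suc l) (m + l) = Y l (m + l)" by blast
  have YQ: "\<And>l. Y l \<in> Qp p" using Y(1) by blast
  note lim = Qp_coherent_limit[OF p_pos YQ Y(2)]
  have uncovered: "Y (k i) (k i) \<noteq> a i (k i)" for i
  proof
    assume hit: "Y (k i) (k i) = a i (k i)"
    define l where "l = k i - m"
    have "a i (k i) = Y l (k i)" using hit lim(2)[of "k i" l] by (simp add: l_def)
    then have "mass (m + l) (Y l) i = q ^ (m + l)" by (rule mass_if_centre_agrees) (simp add: l_def)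
    then show False using mass_le_cover_mass[of "m + l" "Y l" i] Y(1)[of l] by simp
  qed
  have "Y m m = Y 0 m" by (rule lim(2)) simp
  then have "Y m m = y m" using Y(1)[of 0] by simp
  then show ?thesis using lim(1) uncovered by (intro bexI[of _ "\<lambda>n. Y n n"]) auto
qed

end

lemma exponent_nonneg_if_suminf_powr_less_1:
  assumes "(p::int) > 1" "summable (\<lambda>i. real_of_int p powr (- real_of_int (r i)))"
    and "(\<Sum>i. real_of_int p powr (- real_of_int (r i))) < 1"
  shows "0 \<le> r i"
proof -
  have "real_of_int p powr (- real_of_int (r i)) \<le> (\<Sum>i. real_of_int p powr (- real_of_int (r i)))"
    using sum_le_suminf[OF assms(2), of "{i}"] by simp
  then have "real_of_int p powr (- real_of_int (r i)) < real_of_int p powr 0" using assms(1,3) by simp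
  moreover have "1 < real_of_int p" using assms(1) by simp
  ultimately have "- real_of_int (r i) < 0" using powr_less_cancel_iff by blast
  then show ?thesis by simp
qed

lemma residue_class_not_haar_null:
  assumes "(p::int) > 1" "y \<in> Qp p"
  shows "\<not> haar_null p {x \<in> Qp p. x m = y m}"
proof
  define \<rho> where "\<rho> = 1 / real_of_int p"
  have \<rho>: "0 < \<rho>" "\<rho> \<le> 1" using assms(1) unfolding \<rho>_def by auto
  assume null: "haar_null p {x \<in> Qp p. x m = y m}"
  have "0 < \<rho> ^ m" using \<rho> by simp
  with null obtain a r where a: "\<And>i. a i \<in> Qp p" and cov: "{x \<in> Qp p. x m = y m} \<subseteq> (\<Union>i. qp_ball p (a i) (r i))"
    and sm: "summable (\<lambda>i. real_of_int p powr (- real_of_int (r i)))"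
    and lt: "(\<Sum>i. real_of_int p powr (- real_of_int (r i))) < \<rho> ^ m"
    unfolding haar_null_def by blast
  have "(\<Sum>i. real_of_int p powr (- real_of_int (r i))) < 1" using lt \<rho> power_le_one[of \<rho> m] by linarith
  then have "0 \<le> r i" for i by (rule exponent_nonneg_if_suminf_powr_less_1[OF assms(1) sm])
  then have r: "r i = int (nat (r i))" for i by simp
  have radii: "real_of_int p powr (- real_of_int (r i)) = \<rho> ^ nat (r i)" for i
    using powr_neg_of_nat[of p "nat (r i)"] r[of i] assms(1) unfolding \<rho>_def by simp
  interpret ball_cover p a "\<lambda>i. nat (r i)"
    using assms(1) a sm unfolding radii \<rho>_def by unfold_locales auto
  have "cover_mass m y < q ^ m"
    using cover_mass_le[of m y] lt unfolding radii \<rho>_def q_def by simp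
  then obtain x where "x \<in> Qp p" "x m = y m" and uncovered: "\<And>i. x (nat (r i)) \<noteq> a i (nat (r i))"
    using exists_uncovered_point[OF assms(2)] by blast
  then have "x \<in> (\<Union>i. qp_ball p (a i) (int (nat (r i))))" using cov r by auto
  then obtain i where "x \<in> qp_ball p (a i) (int (nat (r i)))" by blast
  then show False using uncovered mem_qp_ball_iff[OF p_pos a] by blast
qed

section \<open>Tilings by translates\<close>

lemma qp_of_rat_int_plus_frac:
  assumes "(p::int) > 0" "s \<in> {0..<p ^ n}" "y \<in> Qp p"
  defines "t \<equiv> qp_of_rat p (of_int s + y 0)"
  shows "t \<in> Qp p" "t 0 = y 0" "\<lfloor>t n\<rfloor> = s"
proof -
  have y: "0 \<le> y 0" "y 0 < 1" using QpD(2,3)[OF assms(3), of 0] by auto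
  show "t \<in> Qp p"
    unfolding t_def using assms(1) QpD(1)[OF assms(3)] by (intro qp_of_rat_in_Qp p_fraction_add p_fraction_of_int)
  have "of_int s + y 0 < of_int (s + 1)" using y by simp
  also have "\<dots> \<le> of_int (p ^ n)" using assms(2) by (simp only: of_int_le_iff) auto
  finally have "t n = of_int s + y 0"
    unfolding t_def qp_of_rat_def using assms(1,2) y by (intro red_eq_self) auto
  then show "\<lfloor>t n\<rfloor> = s" using y by (simp add: floor_unique)
  have "red p 0 (of_int s + y 0) = red p 0 (y 0)" by (rule red_cong[OF assms(1), of _ _ _ s]) simp
  then show "t 0 = y 0" unfolding t_def qp_of_rat_def using red_eq_self[OF assms(1)] y by simp
qed

lemma add_mod_eq_iff:
  assumes "c \<in> {0..<N}" "r \<in> {0..<(N::int)}"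
  shows "(c + s) mod N = r \<longleftrightarrow> c = (r - s) mod N"
proof
  assume "(c + s) mod N = r"
  then have "(r - s) mod N = ((c + s) mod N - s) mod N" by simp
  also have "\<dots> = c mod N" by (simp add: mod_diff_left_eq)
  finally show "c = (r - s) mod N" using assms(1) by simp
next
  assume "c = (r - s) mod N"
  then have "(c + s) mod N = (r - s + s) mod N" by (simp add: mod_add_left_eq)
  then show "(c + s) mod N = r" using assms(2) by simp
qed

lemma tiles_ZN_iff:
  fixes N :: int and C :: "int set"
  assumes "C \<subseteq> {0..<N}"
  shows "tiles_ZN N C \<longleftrightarrow> (\<exists>S\<subseteq>{0..<N}. \<forall>r\<in>{0..<N}. \<exists>!s. s \<in> S \<and> (r - s) mod N \<in> C)"
proof -
  have pair_iff: "cs \<in> C \<times> S \<and> (fst cs + snd cs) mod N = r \<longleftrightarrow>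
      snd cs \<in> S \<and> (r - snd cs) mod N \<in> C \<and> fst cs = (r - snd cs) mod N" if "r \<in> {0..<N}" for S r cs
  proof (cases cs)
    case (Pair c s)
    have "c \<in> C \<Longrightarrow> (c + s) mod N = r \<longleftrightarrow> c = (r - s) mod N" using add_mod_eq_iff[OF _ that] assms by blast
    then show ?thesis unfolding Pair by auto
  qed
  have graph: "(\<exists>!cs. Q (snd cs) \<and> fst cs = f (snd cs)) \<longleftrightarrow> (\<exists>!s. Q s)" for Q and f :: "int \<Rightarrow> int"
    by (auto simp: Ex1_def)
  have "(\<exists>!cs. cs \<in> C \<times> S \<and> (fst cs + snd cs) mod N = r) \<longleftrightarrow> (\<exists>!s. s \<in> S \<and> (r - s) mod N \<in> C)"
    if "r \<in> {0..<N}" for S r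
  proof -
    have "(\<exists>!cs. cs \<in> C \<times> S \<and> (fst cs + snd cs) mod N = r) \<longleftrightarrow>
        (\<exists>!cs. (snd cs \<in> S \<and> (r - snd cs) mod N \<in> C) \<and> fst cs = (r - snd cs) mod N)"
      using pair_iff[OF that] by simp
    also have "\<dots> \<longleftrightarrow> (\<exists>!s. s \<in> S \<and> (r - s) mod N \<in> C)" by (rule graph)
    finally show ?thesis .
  qed
  then show ?thesis unfolding tiles_ZN_def by (simp only: cong: ball_cong)
qed

lemma disjoint_family_cover_iff_unique:
  assumes "\<And>t. t \<in> T \<Longrightarrow> A t = {z \<in> X. R z t}"
  shows "((\<Union>t\<in>T. A t) = X \<and> (\<forall>t\<in>T. \<forall>s\<in>T. t \<noteq> s \<longrightarrow> A t \<inter> A s = {})) \<longleftrightarrow>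
         (\<forall>x\<in>X. \<exists>!t. t \<in> T \<and> R x t)"
proof
  assume cover: "(\<Union>t\<in>T. A t) = X \<and> (\<forall>t\<in>T. \<forall>s\<in>T. t \<noteq> s \<longrightarrow> A t \<inter> A s = {})"
  show "\<forall>x\<in>X. \<exists>!t. t \<in> T \<and> R x t"
  proof
    fix x assume "x \<in> X"
    then obtain t where "t \<in> T" "x \<in> A t" using cover by blast
    then show "\<exists>!t. t \<in> T \<and> R x t"
      using cover assms \<open>x \<in> X\<close> by (intro ex1I[of _ t]) blast+
  qed
next
  assume unique: "\<forall>x\<in>X. \<exists>!t. t \<in> T \<and> R x t"
  then show "(\<Union>t\<in>T. A t) = X \<and> (\<forall>t\<in>T. \<forall>s\<in>T. t \<noteq> s \<longrightarrow> A t \<inter> A s = {})"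
    using assms by auto
qed

definition translates_partition :: "int \<Rightarrow> (nat \<Rightarrow> rat) set \<Rightarrow> (nat \<Rightarrow> rat) set \<Rightarrow> bool" where
  "translates_partition p \<Omega> X = (\<exists>T\<subseteq>X. \<forall>x\<in>X. \<exists>!t. t \<in> T \<and> qp_diff p x t \<in> \<Omega>)"

lemma tiles_Zp_iff_translates_partition:
  assumes "(p::int) > 0" "\<Omega> \<subseteq> Zp p"
  shows "tiles_Zp p \<Omega> \<longleftrightarrow> translates_partition p \<Omega> (Zp p)"
proof -
  have mem: "z \<in> (\<lambda>w. qp_add p w t) ` \<Omega> \<longleftrightarrow> z \<in> Zp p \<and> qp_diff p z t \<in> \<Omega>" if "t \<in> Zp p" for t z
  proof -
    have "(\<lambda>w. qp_add p w t) ` \<Omega> \<subseteq> Zp p" using qp_add_in_Zp[OF assms(1) _ that] assms(2) by blast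
    moreover have "Zp p \<subseteq> Qp p" "\<Omega> \<subseteq> Qp p" "t \<in> Qp p" using assms(2) that by (auto simp: Zp_def)
    ultimately show ?thesis using mem_translate_iff[OF assms(1), of t \<Omega> z] by blast
  qed
  have "(\<Union>t\<in>T. (\<lambda>w. qp_add p w t) ` \<Omega>) = Zp p \<and>
        (\<forall>t\<in>T. \<forall>s\<in>T. t \<noteq> s \<longrightarrow> (\<lambda>w. qp_add p w t) ` \<Omega> \<inter> (\<lambda>w. qp_add p w s) ` \<Omega> = {}) \<longleftrightarrow>
        (\<forall>x\<in>Zp p. \<exists>!t. t \<in> T \<and> qp_diff p x t \<in> \<Omega>)" if "T \<subseteq> Zp p" for T
  proof (rule disjoint_family_cover_iff_unique[where A = "\<lambda>t. (\<lambda>w. qp_add p w t) ` \<Omega>"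
        and R = "\<lambda>z t. qp_diff p z t \<in> \<Omega>"])
    fix t assume "t \<in> T"
    then show "(\<lambda>w. qp_add p w t) ` \<Omega> = {z \<in> Zp p. qp_diff p z t \<in> \<Omega>}"
      using mem that by blast
  qed
  then show ?thesis unfolding tiles_Zp_def translates_partition_def by (simp only: cong: conj_cong)
qed

lemma translates_partition_Qp_imp_Zp:
  assumes "(p::int) > 0" "\<Omega> \<subseteq> Zp p" "translates_partition p \<Omega> (Qp p)"
  shows "translates_partition p \<Omega> (Zp p)"
proof -
  obtain T where T: "T \<subseteq> Qp p" and unique: "\<forall>x\<in>Qp p. \<exists>!t. t \<in> T \<and> qp_diff p x t \<in> \<Omega>"
    using assms(3) unfolding translates_partition_def by blast
  have unique_Zp: "\<exists>!t. t \<in> T \<inter> Zp p \<and> qp_diff p x t \<in> \<Omega>" if x: "x \<in> Zp p" for x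
  proof -
    have "\<exists>!t. t \<in> T \<and> qp_diff p x t \<in> \<Omega>" using unique x by (simp add: Zp_def)
    then obtain t where t: "t \<in> T" "qp_diff p x t \<in> \<Omega>"
      and the: "\<forall>s. s \<in> T \<and> qp_diff p x s \<in> \<Omega> \<longrightarrow> s = t"
      by (elim ex1E) blast
    have "t \<in> Qp p" "qp_diff p x t \<in> Zp p" using t T assms(2) by blast+
    then have "t \<in> Zp p" by (rule in_Zp_if_qp_diff_in_Zp[OF assms(1) x])
    then show ?thesis using t the by blast
  qed
  show ?thesis unfolding translates_partition_def
    by (intro exI[of _ "T \<inter> Zp p"] conjI ballI unique_Zp) auto
qed

lemma tiles_Qp_iff_translates_partition:
  assumes "(p::int) > 1"
    and periodic: "\<And>x y. x \<in> Qp p \<Longrightarrow> y \<in> Qp p \<Longrightarrow> x m = y m \<Longrightarrow> x \<in> \<Omega> \<longleftrightarrow> y \<in> \<Omega>"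
  shows "tiles_Qp p \<Omega> \<longleftrightarrow> translates_partition p \<Omega> (Qp p)"
proof
  assume "tiles_Qp p \<Omega>"
  then obtain T where T: "T \<subseteq> Qp p"
    and null: "haar_null p {x \<in> Qp p. \<not> (\<exists>!t. t \<in> T \<and> qp_diff p x t \<in> \<Omega>)}"
    unfolding tiles_Qp_def by (elim exE conjE) (rule that)
  have "\<exists>!t. t \<in> T \<and> qp_diff p x t \<in> \<Omega>" if x: "x \<in> Qp p" for x
  proof (rule ccontr)
    assume bad: "\<not> (\<exists>!t. t \<in> T \<and> qp_diff p x t \<in> \<Omega>)"
    have same: "qp_diff p z t \<in> \<Omega> \<longleftrightarrow> qp_diff p x t \<in> \<Omega>" if z: "z \<in> Qp p" "z m = x m" and "t \<in> T" for z t
    proof -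
      have t: "t \<in> Qp p" using T \<open>t \<in> T\<close> by blast
      have "qp_diff p z t m = qp_diff p x t m" using z(2) by (simp add: qp_diff_def)
      then show ?thesis
        using periodic[OF qp_diff_in_Qp[OF _ z(1) t] qp_diff_in_Qp[OF _ x t]] assms(1) by simp
    qed
    have "{z \<in> Qp p. z m = x m} \<subseteq> {x \<in> Qp p. \<not> (\<exists>!t. t \<in> T \<and> qp_diff p x t \<in> \<Omega>)}"
    proof
      fix z assume z: "z \<in> {z \<in> Qp p. z m = x m}"
      then have "(\<lambda>t. t \<in> T \<and> qp_diff p z t \<in> \<Omega>) = (\<lambda>t. t \<in> T \<and> qp_diff p x t \<in> \<Omega>)"
        using same by blast
      then show "z \<in> {x \<in> Qp p. \<not> (\<exists>!t. t \<in> T \<and> qp_diff p x t \<in> \<Omega>)}" using z bad by simp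
    qed
    then show False using residue_class_not_haar_null[OF assms(1) x] haar_null_mono[OF null] by blast
  qed
  then show "translates_partition p \<Omega> (Qp p)"
    unfolding translates_partition_def by (intro exI[of _ T] conjI ballI T)
next
  assume "translates_partition p \<Omega> (Qp p)"
  then obtain T where T: "T \<subseteq> Qp p" and unique: "\<forall>x\<in>Qp p. \<exists>!t. t \<in> T \<and> qp_diff p x t \<in> \<Omega>"
    unfolding translates_partition_def by (elim exE conjE) (rule that)
  then have no_bad: "{x \<in> Qp p. \<not> (\<exists>!t. t \<in> T \<and> qp_diff p x t \<in> \<Omega>)} = {}" by simp
  show "tiles_Qp p \<Omega>"
    unfolding tiles_Qp_def
    by (intro exI[of _ T] conjI T) (simp only: no_bad haar_null_empty[OF assms(1)])
qed

section \<open>The tile $\Omega$ defined by residues\<close>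

locale residue_tile =
  fixes p :: int and \<gamma> :: nat and C :: "int set"
  assumes p_gt_1: "p > 1" and C_subset: "C \<subseteq> {0..<p ^ \<gamma>}"
begin

lemma p_pos: "p > 0" using p_gt_1 by simp

definition Omega :: "(nat \<Rightarrow> rat) set" where
  "Omega = {x \<in> Qp p. \<exists>c\<in>C. x \<gamma> = of_int c}"

lemma Omega_eq_Union_balls: "(\<Union>c\<in>C. qp_ball p (qp_of_int p c) (int \<gamma>)) = Omega"
proof -
  have "x \<in> qp_ball p (qp_of_int p c) (int \<gamma>) \<longleftrightarrow> x \<in> Qp p \<and> x \<gamma> = of_int c" if "c \<in> C" for x c
  proof -
    have "qp_of_int p c \<in> Qp p" using qp_of_int_in_Zp[OF p_pos] by (simp add: Zp_def)
    then show ?thesis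
      using mem_qp_ball_iff[OF p_pos] qp_of_int_nth[OF p_pos] C_subset that by auto
  qed
  then show ?thesis unfolding Omega_def by blast
qed

lemma Omega_subset_Zp: "Omega \<subseteq> Zp p"
proof
  fix x assume "x \<in> Omega"
  then obtain c where "x \<in> Qp p" "x \<gamma> = of_int c" by (auto simp: Omega_def)
  then show "x \<in> Zp p" using Qp_red[OF p_pos, of x 0 \<gamma>] by (simp add: Zp_def red_def)
qed

lemma qp_diff_mem_Omega_iff:
  assumes "x \<in> Qp p" "t \<in> Qp p"
  shows "qp_diff p x t \<in> Omega \<longleftrightarrow> x 0 = t 0 \<and> (\<lfloor>x \<gamma>\<rfloor> - \<lfloor>t \<gamma>\<rfloor>) mod p ^ \<gamma> \<in> C"
proof -
  have diff: "x \<gamma> - t \<gamma> = of_int (\<lfloor>x \<gamma>\<rfloor> - \<lfloor>t \<gamma>\<rfloor>) + (x 0 - t 0)"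
    using Qp_floor_add_frac[OF p_pos assms(1), of \<gamma>] Qp_floor_add_frac[OF p_pos assms(2), of \<gamma>] by simp
  have red_int: "red p \<gamma> (x \<gamma> - t \<gamma>) = of_int ((\<lfloor>x \<gamma>\<rfloor> - \<lfloor>t \<gamma>\<rfloor>) mod p ^ \<gamma>)" if "x 0 = t 0"
    using diff that red_of_int[OF p_pos, of \<gamma> "\<lfloor>x \<gamma>\<rfloor> - \<lfloor>t \<gamma>\<rfloor>"] by simp
  have "qp_diff p x t \<in> Omega \<longleftrightarrow> (\<exists>c\<in>C. red p \<gamma> (x \<gamma> - t \<gamma>) = of_int c)"
    using qp_diff_in_Qp[OF p_pos assms] by (simp add: Omega_def qp_diff_def)
  also have "\<dots> \<longleftrightarrow> x 0 = t 0 \<and> (\<lfloor>x \<gamma>\<rfloor> - \<lfloor>t \<gamma>\<rfloor>) mod p ^ \<gamma> \<in> C"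
  proof
    assume "\<exists>c\<in>C. red p \<gamma> (x \<gamma> - t \<gamma>) = of_int c"
    then obtain c where c: "c \<in> C" "red p \<gamma> (x \<gamma> - t \<gamma>) = of_int c" by blast
    have "x 0 = t 0"
      using red_int_plus_diff_imp_eq[OF p_pos c(2)[unfolded diff]] QpD(2,3)[OF assms(1), of 0] QpD(2,3)[OF assms(2), of 0]
      by simp
    then show "x 0 = t 0 \<and> (\<lfloor>x \<gamma>\<rfloor> - \<lfloor>t \<gamma>\<rfloor>) mod p ^ \<gamma> \<in> C"
      using c red_int by simp
  qed (use red_int in simp)
  finally show ?thesis .
qed

lemma translates_partition_Zp_imp_tiles_ZN:
  assumes "translates_partition p Omega (Zp p)"
  shows "tiles_ZN (p ^ \<gamma>) C"
proof -
  obtain T where T: "T \<subseteq> Zp p" and unique: "\<forall>x\<in>Zp p. \<exists>!t. t \<in> T \<and> qp_diff p x t \<in> Omega"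
    using assms unfolding translates_partition_def by (elim exE conjE) (rule that)
  have hit_iff: "qp_diff p (qp_of_int p r) t \<in> Omega \<longleftrightarrow> (r - \<lfloor>t \<gamma>\<rfloor>) mod p ^ \<gamma> \<in> C"
    if "r \<in> {0..<p ^ \<gamma>}" "t \<in> T" for r t
    using qp_diff_mem_Omega_iff qp_of_int_in_Zp[OF p_pos] qp_of_int_nth[OF p_pos that(1)] T that(2)
    by (auto simp: Zp_def)
  have "\<exists>!s. s \<in> (\<lambda>t. \<lfloor>t \<gamma>\<rfloor>) ` T \<and> (r - s) mod p ^ \<gamma> \<in> C" if r: "r \<in> {0..<p ^ \<gamma>}" for r
  proof -
    have eq: "(\<lambda>t. t \<in> T \<and> qp_diff p (qp_of_int p r) t \<in> Omega) = (\<lambda>t. t \<in> T \<and> (r - \<lfloor>t \<gamma>\<rfloor>) mod p ^ \<gamma> \<in> C)"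
      using hit_iff[OF r] by blast
    then have "\<exists>!t. t \<in> T \<and> (r - \<lfloor>t \<gamma>\<rfloor>) mod p ^ \<gamma> \<in> C"
      using bspec[OF unique qp_of_int_in_Zp[OF p_pos, of r]] by (simp only: eq)
    then obtain t where t: "t \<in> T" "(r - \<lfloor>t \<gamma>\<rfloor>) mod p ^ \<gamma> \<in> C"
      and the: "\<forall>t'. t' \<in> T \<and> (r - \<lfloor>t' \<gamma>\<rfloor>) mod p ^ \<gamma> \<in> C \<longrightarrow> t' = t"
      by (elim ex1E) blast
    show ?thesis using t the by (intro ex1I[of _ "\<lfloor>t \<gamma>\<rfloor>"]) blast+
  qed
  moreover have "(\<lambda>t. \<lfloor>t \<gamma>\<rfloor>) ` T \<subseteq> {0..<p ^ \<gamma>}" using T Qp_floor_range by (auto simp: Zp_def)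
  ultimately show ?thesis
    unfolding tiles_ZN_iff[OF C_subset] by (intro exI[of _ "(\<lambda>t. \<lfloor>t \<gamma>\<rfloor>) ` T"] conjI ballI)
qed

lemma tiles_ZN_imp_translates_partition_Qp:
  assumes "tiles_ZN (p ^ \<gamma>) C"
  shows "translates_partition p Omega (Qp p)"
proof -
  obtain S where S: "S \<subseteq> {0..<p ^ \<gamma>}" and unique: "\<forall>r\<in>{0..<p ^ \<gamma>}. \<exists>!s. s \<in> S \<and> (r - s) mod p ^ \<gamma> \<in> C"
    using assms unfolding tiles_ZN_iff[OF C_subset] by (elim exE conjE) (rule that)
  \<comment> \<open>The tiling set S + (\<int>[1/p] \<inter> [0,1)); the fractional parts are those of points of \<rat>_p.\<close>
  define lift where "lift s y = qp_of_rat p (of_int s + y 0)" for s :: int and y :: "nat \<Rightarrow> rat"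
  define T where "T = (\<lambda>(s, y). lift s y) ` (S \<times> Qp p)"
  note lift = qp_of_rat_int_plus_frac[OF p_pos subsetD[OF S], folded lift_def]
  have T_Qp: "T \<subseteq> Qp p" unfolding T_def using lift(1) by auto
  have "\<exists>!t. t \<in> T \<and> qp_diff p x t \<in> Omega" if x: "x \<in> Qp p" for x
  proof -
    obtain s where s: "s \<in> S" "(\<lfloor>x \<gamma>\<rfloor> - s) mod p ^ \<gamma> \<in> C"
      and the: "\<forall>s'. s' \<in> S \<and> (\<lfloor>x \<gamma>\<rfloor> - s') mod p ^ \<gamma> \<in> C \<longrightarrow> s' = s"
      using unique Qp_floor_range[OF x] by (elim ballE ex1E) blast+
    show ?thesis
    proof (rule ex1I[of _ "lift s x"])
      show "lift s x \<in> T \<and> qp_diff p x (lift s x) \<in> Omega"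
        using s lift[OF s(1) x] x unfolding T_def by (auto simp: qp_diff_mem_Omega_iff)
    next
      fix t assume t: "t \<in> T \<and> qp_diff p x t \<in> Omega"
      then obtain s' y where t_def: "t = lift s' y" "s' \<in> S" "y \<in> Qp p" unfolding T_def by auto
      then have "x 0 = y 0" "(\<lfloor>x \<gamma>\<rfloor> - s') mod p ^ \<gamma> \<in> C"
        using t x lift[of s' y] by (auto simp: qp_diff_mem_Omega_iff)
      then show "t = lift s x" using the t_def by (simp add: lift_def)
    qed
  qed
  then show ?thesis unfolding translates_partition_def by (intro exI[of _ T] conjI ballI T_Qp)
qed

end

theorem lemma2p10:
  fixes p :: int and \<gamma> :: nat and C :: "int set" and \<Omega> :: "(nat \<Rightarrow> rat) set"
  assumes "prime p" and "\<gamma> \<ge> 1"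
    and "C \<subseteq> {0..<p ^ \<gamma>}" and "C \<noteq> {}"
    and "\<Omega> = (\<Union>c\<in>C. qp_ball p (qp_of_int p c) (int \<gamma>))"
  shows "(tiles_Zp p \<Omega> \<longleftrightarrow> tiles_ZN (p ^ \<gamma>) C) \<and>
         (tiles_ZN (p ^ \<gamma>) C \<longleftrightarrow> tiles_Qp p \<Omega>)"
proof -
  interpret residue_tile p \<gamma> C
    using assms(1,3) by unfold_locales (simp_all add: prime_gt_1_int)
  have \<Omega>: "\<Omega> = Omega" using assms(5) Omega_eq_Union_balls by simp
  have Zp: "tiles_Zp p \<Omega> \<longleftrightarrow> translates_partition p Omega (Zp p)"
    unfolding \<Omega> by (rule tiles_Zp_iff_translates_partition[OF p_pos Omega_subset_Zp])
  have Qp: "tiles_Qp p \<Omega> \<longleftrightarrow> translates_partition p Omega (Qp p)"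
    unfolding \<Omega> by (rule tiles_Qp_iff_translates_partition[OF p_gt_1, where m = \<gamma>]) (simp add: Omega_def)
  have "tiles_ZN (p ^ \<gamma>) C \<Longrightarrow> translates_partition p Omega (Qp p)"
    by (rule tiles_ZN_imp_translates_partition_Qp)
  moreover have "translates_partition p Omega (Qp p) \<Longrightarrow> translates_partition p Omega (Zp p)"
    by (rule translates_partition_Qp_imp_Zp[OF p_pos Omega_subset_Zp])
  moreover have "translates_partition p Omega (Zp p) \<Longrightarrow> tiles_ZN (p ^ \<gamma>) C"
    by (rule translates_partition_Zp_imp_tiles_ZN)
  ultimately show ?thesis using Zp Qp by blast
qed

end
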